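(* Let $Y$ be a metric space and $X$ a non-empty subset. If for every pair of points $x,y\in Y$ there exists a point $z\in C(x,y)\cap X$ (cone taken in $Y$), then the restriction map $f\mapsto f|_X$ is an isometry from $\mathrm{E}(Y)$ onto $\mathrm{E}(X)$.
   Context: $I(x,y)=\{v\in Y: d(x,v)+d(v,y)=d(x,y)\}$ and $C(x,v)=\{y\in Y: v\in I(x,y)\}$. For a metric space $Z$, $\Delta(Z)=\{f\colon Z\to\mathbb R: f(x)+f(y)\ge d(x,y)\ \forall x,y\}$ with the pointwise order; $\mathrm E(Z)$ is its set of minimal elements, with metric $\|f-g\|_\infty=\sup|f-g|$. *)

theory Defs
  imports "HOL-Analysis.Analysis"
begin

text \<open>Real-valued functions on a subset Z are modelled
  as functions on the whole type that vanish outside Z (extensional convention).\<close>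

definition metric_interval :: "'a::metric_space set \<Rightarrow> 'a \<Rightarrow> 'a \<Rightarrow> 'a set" where
  "metric_interval Y x y = {v \<in> Y. dist x v + dist v y = dist x y}"

definition metric_cone :: "'a::metric_space set \<Rightarrow> 'a \<Rightarrow> 'a \<Rightarrow> 'a set" where
  "metric_cone Y x v = {y \<in> Y. v \<in> metric_interval Y x y}"

definition Delta :: "'a::metric_space set \<Rightarrow> ('a \<Rightarrow> real) set" where
  "Delta Z = {f. (\<forall>x\<in>Z. \<forall>y\<in>Z. dist x y \<le> f x + f y) \<and> (\<forall>x. x \<notin> Z \<longrightarrow> f x = 0)}"

definition Ext :: "'a::metric_space set \<Rightarrow> ('a \<Rightarrow> real) set" where
  "Ext Z = {f \<in> Delta Z. \<forall>g \<in> Delta Z. (\<forall>x\<in>Z. g x \<le> f x) \<longrightarrow> g = f}"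

definition sup_dist :: "'a set \<Rightarrow> ('a \<Rightarrow> real) \<Rightarrow> ('a \<Rightarrow> real) \<Rightarrow> ereal" where
  "sup_dist Z f g = (SUP x\<in>Z. ereal \<bar>f x - g x\<bar>)"

definition restr :: "'a set \<Rightarrow> ('a \<Rightarrow> real) \<Rightarrow> ('a \<Rightarrow> real)" where
  "restr X f = (\<lambda>x. if x \<in> X then f x else 0)"

end

theory Submission
  imports Defs
begin

text \<open>An extremal function f on Y is tight: for every y and e > 0 some w has
  f y + f w \<le> d(y,w) + e. The cone condition gives z \<in> X with w \<in> I(y,z), and since
  extremal functions are 1-Lipschitz, z is again such a witness. So tightness is
  witnessed inside X: f|X is extremal on X, and |f y - g y| is bounded by the
  supremum of |f - g| over X, which gives injectivity and the isometry. Conversely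
  h \<in> E(X) extends to y \<mapsto> sup over z \<in> X of d(y,z) - h z, which is extremal on Y,
  again by the cone condition.\<close>

lemma Delta_nonneg: "f \<in> Delta Z \<Longrightarrow> x \<in> Z \<Longrightarrow> 0 \<le> f x"
  using dist_self[of x] unfolding Delta_def by fastforce

lemma Ext_DeltaD:
  assumes "f \<in> Ext Z"
  shows "x \<in> Z \<Longrightarrow> y \<in> Z \<Longrightarrow> dist x y \<le> f x + f y" and "x \<notin> Z \<Longrightarrow> f x = 0"
  using assms unfolding Ext_def Delta_def by auto

lemma Ext_tightD:
  assumes "f \<in> Ext Z" "x \<in> Z" "e > 0"
  shows "\<exists>y\<in>Z. f x + f y \<le> dist x y + e"
proof (rule ccontr)
  assume "\<not> ?thesis"
  hence gap: "\<forall>y\<in>Z. dist x y + e < f x + f y" by auto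
  have fD: "f \<in> Delta Z" and min: "\<forall>g\<in>Delta Z. (\<forall>x\<in>Z. g x \<le> f x) \<longrightarrow> g = f"
    using assms(1) unfolding Ext_def by auto
  define g where "g = f(x := max (f x - e) 0)"
  have "g \<in> Delta Z"
    using fD gap assms(2) unfolding Delta_def g_def
    by (auto simp: dist_commute max_def split: if_splits)
  moreover have "\<forall>u\<in>Z. g u \<le> f u"
    using Delta_nonneg[OF fD assms(2)] assms(3) by (auto simp: g_def)
  ultimately have "g = f" using min by auto
  moreover have "g x < f x" using gap assms(2,3) by (auto simp: g_def)
  ultimately show False by simp
qed

lemma Ext_tightI:
  assumes fD: "f \<in> Delta Z" and tight: "\<And>x e. x \<in> Z \<Longrightarrow> e > 0 \<Longrightarrow> \<exists>y\<in>Z. f x + f y \<le> dist x y + e"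
  shows "f \<in> Ext Z"
  unfolding Ext_def
proof (intro CollectI conjI ballI impI fD)
  fix g assume gD: "g \<in> Delta Z" and le: "\<forall>x\<in>Z. g x \<le> f x"
  have "f u \<le> g u" if u: "u \<in> Z" for u
  proof (rule field_le_epsilon)
    fix e :: real assume "e > 0"
    then obtain y where y: "y \<in> Z" "f u + f y \<le> dist u y + e" using tight u by blast
    have "dist u y \<le> g u + g y" using gD u y unfolding Delta_def by auto
    thus "f u \<le> g u + e" using y le by force
  qed
  moreover have "g u = f u" if "u \<notin> Z" for u using that gD fD unfolding Delta_def by auto
  ultimately show "g = f" using le by (intro ext) (metis order_antisym)
qed

lemma Ext_lipschitz:
  assumes "f \<in> Ext Z" "y \<in> Z" "z \<in> Z"
  shows "f z \<le> f y + dist y z"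
proof (rule field_le_epsilon)
  fix e :: real assume "e > 0"
  then obtain w where w: "w \<in> Z" "f z + f w \<le> dist z w + e" using Ext_tightD assms by blast
  have "dist y w \<le> f y + f w" using Ext_DeltaD(1)[OF assms(1,2) w(1)] .
  moreover have "dist z w \<le> dist z y + dist y w" by (rule dist_triangle)
  ultimately show "f z \<le> f y + dist y z + e" using w by (simp add: dist_commute)
qed

lemma sup_dist_restr: "sup_dist X (restr X f) (restr X g) = sup_dist X f g"
  unfolding sup_dist_def restr_def by (rule SUP_cong) auto

lemma metric_cone_meets_iff:
  assumes "X \<subseteq> Y" "y \<in> Y"
  shows "(\<exists>z. z \<in> metric_cone Y x y \<inter> X) \<longleftrightarrow> (\<exists>z\<in>X. dist x y + dist y z = dist x z)"
  using assms unfolding metric_cone_def metric_interval_def by blast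

definition sup_extension :: "'a::metric_space set \<Rightarrow> 'a set \<Rightarrow> ('a \<Rightarrow> real) \<Rightarrow> 'a \<Rightarrow> real" where
  "sup_extension Y X h = (\<lambda>y. if y \<in> Y then (SUP z\<in>X. dist y z - h z) else 0)"

context
  fixes X Y :: "'a::metric_space set"
  assumes X_subset: "X \<subseteq> Y"
    and cone: "\<And>x y. x \<in> Y \<Longrightarrow> y \<in> Y \<Longrightarrow> \<exists>z\<in>X. dist x y + dist y z = dist x z"
begin

lemma Ext_tight_within:
  assumes f: "f \<in> Ext Y" and y: "y \<in> Y" and e: "e > 0"
  shows "\<exists>z\<in>X. f y + f z \<le> dist y z + e"
proof -
  obtain w where w: "w \<in> Y" "f y + f w \<le> dist y w + e" using Ext_tightD f y e by blast
  obtain z where z: "z \<in> X" "dist y w + dist w z = dist y z" using cone y w by blast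
  have "f z \<le> f w + dist w z" using Ext_lipschitz[OF f w(1)] z X_subset by blast
  hence "f y + f z \<le> dist y z + e" using z w by linarith
  thus ?thesis using z(1) by blast
qed

lemma restr_Ext: "f \<in> Ext Y \<Longrightarrow> restr X f \<in> Ext X"
  using X_subset Ext_tight_within[of f]
  by (intro Ext_tightI) (auto simp: Delta_def restr_def dest: Ext_DeltaD)

lemma Ext_diff_approx_within:
  assumes f: "f \<in> Ext Y" and g: "g \<in> Ext Y" and y: "y \<in> Y" and e: "e > 0"
  shows "\<exists>z\<in>X. f y - g y \<le> g z - f z + e"
proof -
  obtain z where z: "z \<in> X" "f y + f z \<le> dist y z + e" using Ext_tight_within[OF f y e] by blast
  have "dist y z \<le> g y + g z" using Ext_DeltaD(1)[OF g y] z X_subset by blast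
  hence "f y - g y \<le> g z - f z + e" using z(2) by linarith
  with z(1) show ?thesis by blast
qed

lemma inj_on_restr_Ext: "inj_on (restr X) (Ext Y)"
proof (rule inj_onI)
  fix f g assume f: "f \<in> Ext Y" and g: "g \<in> Ext Y" and eq: "restr X f = restr X g"
  have eq_on: "f z = g z" if "z \<in> X" for z using fun_cong[OF eq, of z] that by (simp add: restr_def)
  have le: "f' y \<le> g' y"
    if f': "f' \<in> Ext Y" and g': "g' \<in> Ext Y" and y: "y \<in> Y" and eq_on': "\<And>z. z \<in> X \<Longrightarrow> f' z = g' z"
    for f' g' y
  proof (rule field_le_epsilon)
    fix e :: real assume "e > 0"
    then obtain z where "z \<in> X" "f' y - g' y \<le> g' z - f' z + e"
      using Ext_diff_approx_within[OF f' g' y] by blast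
    thus "f' y \<le> g' y + e" using eq_on'[of z] by linarith
  qed
  show "f = g"
  proof
    fix y show "f y = g y"
    proof (cases "y \<in> Y")
      case True
      with le[OF f g _ eq_on] le[OF g f _ eq_on[symmetric]] show ?thesis by (meson order_antisym)
    next
      case False
      thus ?thesis using Ext_DeltaD(2)[OF f] Ext_DeltaD(2)[OF g] by simp
    qed
  qed
qed

lemma sup_dist_le_within:
  assumes f: "f \<in> Ext Y" and g: "g \<in> Ext Y"
  shows "sup_dist Y f g \<le> sup_dist X f g"
  unfolding sup_dist_def
proof (rule SUP_least)
  fix y assume y: "y \<in> Y"
  let ?S = "SUP x\<in>X. ereal \<bar>f x - g x\<bar>"
  have half: "ereal (f' y - g' y) \<le> ?S + ereal e"
    if f': "f' \<in> Ext Y" and g': "g' \<in> Ext Y" and same_abs: "\<And>x. \<bar>f' x - g' x\<bar> = \<bar>f x - g x\<bar>"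
      and e: "e > 0" for f' g' e
  proof -
    obtain z where z: "z \<in> X" "f' y - g' y \<le> g' z - f' z + e"
      using Ext_diff_approx_within[OF f' g' y e] by blast
    hence "ereal (f' y - g' y) \<le> ereal \<bar>f z - g z\<bar> + ereal e"
      using same_abs[of z] by simp
    also have "\<dots> \<le> ?S + ereal e" using z by (intro add_right_mono SUP_upper) auto
    finally show ?thesis .
  qed
  show "ereal \<bar>f y - g y\<bar> \<le> ?S"
  proof (rule ereal_le_epsilon2)
    fix e :: real assume "e > 0"
    thus "ereal \<bar>f y - g y\<bar> \<le> ?S + ereal e"
      using half[OF f g] half[OF g f] by (simp add: abs_minus_commute abs_if)
  qed
qed

context
  fixes h assumes h: "h \<in> Ext X" and X_nonempty: "X \<noteq> {}"
begin

lemma bdd_above_sup_extension: "bdd_above ((\<lambda>z. dist y z - h z) ` X)"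
proof -
  obtain x0 where x0: "x0 \<in> X" using X_nonempty by blast
  show ?thesis
  proof (rule bdd_aboveI2)
    fix z assume z: "z \<in> X"
    have "dist y z \<le> dist y x0 + dist x0 z" by (rule dist_triangle)
    thus "dist y z - h z \<le> dist y x0 + h x0" using Ext_DeltaD(1)[OF h x0 z] by linarith
  qed
qed

lemma sup_extension_upper: "y \<in> Y \<Longrightarrow> z \<in> X \<Longrightarrow> dist y z - h z \<le> sup_extension Y X h y"
  using cSUP_upper[OF _ bdd_above_sup_extension] by (simp add: sup_extension_def)

lemma sup_extension_eq_on: "x \<in> X \<Longrightarrow> sup_extension Y X h x = h x"
proof (rule antisym)
  assume x: "x \<in> X"
  have "(SUP z\<in>X. dist x z - h z) \<le> h x"
    by (rule cSUP_least[OF X_nonempty]) (use Ext_DeltaD(1)[OF h x] in force)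
  thus "sup_extension Y X h x \<le> h x" using x X_subset by (auto simp: sup_extension_def)
  show "h x \<le> sup_extension Y X h x"
  proof (rule field_le_epsilon)
    fix e :: real assume "e > 0"
    then obtain w where "w \<in> X" "h x + h w \<le> dist x w + e" using Ext_tightD[OF h x] by blast
    thus "h x \<le> sup_extension Y X h x + e" using sup_extension_upper[of x w] x X_subset by force
  qed
qed

lemma sup_extension_Delta: "sup_extension Y X h \<in> Delta Y"
  unfolding Delta_def
proof (intro CollectI conjI ballI allI impI)
  fix y y' assume y: "y \<in> Y" and y': "y' \<in> Y"
  obtain z where z: "z \<in> X" "dist y y' + dist y' z = dist y z" using cone y y' by blast
  show "dist y y' \<le> sup_extension Y X h y + sup_extension Y X h y'"
  proof (rule field_le_epsilon)
    fix e :: real assume "e > 0"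
    then obtain w where w: "w \<in> X" "h z + h w \<le> dist z w + e" using Ext_tightD[OF h z(1)] by blast
    have "dist z w \<le> dist z y' + dist y' w" by (rule dist_triangle)
    thus "dist y y' \<le> sup_extension Y X h y + sup_extension Y X h y' + e"
      using z w sup_extension_upper[OF y' w(1)] sup_extension_upper[OF y z(1)]
      by (simp add: dist_commute)
  qed
qed (simp add: sup_extension_def)

lemma sup_extension_Ext: "sup_extension Y X h \<in> Ext Y"
proof (rule Ext_tightI[OF sup_extension_Delta])
  fix y and e :: real assume y: "y \<in> Y" and e: "e > 0"
  have "sup_extension Y X h y - e < (SUP z\<in>X. dist y z - h z)"
    using y e by (simp add: sup_extension_def)
  then obtain z where "z \<in> X" "sup_extension Y X h y - e < dist y z - h z"
    using less_cSUP_iff[OF X_nonempty bdd_above_sup_extension] by blast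
  thus "\<exists>z\<in>Y. sup_extension Y X h y + sup_extension Y X h z \<le> dist y z + e"
    using sup_extension_eq_on X_subset by force
qed

lemma restr_sup_extension: "restr X (sup_extension Y X h) = h"
  using sup_extension_eq_on Ext_DeltaD(2)[OF h] by (auto simp: restr_def)

end

lemma bij_betw_restr_Ext:
  assumes "X \<noteq> {}"
  shows "bij_betw (restr X) (Ext Y) (Ext X)"
proof -
  have "h \<in> restr X ` Ext Y" if "h \<in> Ext X" for h
    using sup_extension_Ext[OF that assms] restr_sup_extension[OF that assms] by force
  thus ?thesis unfolding bij_betw_def using inj_on_restr_Ext restr_Ext by blast
qed

lemma sup_dist_restr_Ext:
  assumes "f \<in> Ext Y" "g \<in> Ext Y"
  shows "sup_dist X (restr X f) (restr X g) = sup_dist Y f g"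
proof -
  have "sup_dist X f g \<le> sup_dist Y f g"
    unfolding sup_dist_def by (rule SUP_subset_mono[OF X_subset]) auto
  with sup_dist_le_within[OF assms] show ?thesis by (simp add: sup_dist_restr)
qed

end

theorem proposition5p4:
  fixes Y X :: "'a::metric_space set"
  assumes "X \<subseteq> Y" and "X \<noteq> {}"
    and "\<forall>x\<in>Y. \<forall>y\<in>Y. \<exists>z. z \<in> metric_cone Y x y \<inter> X"
  shows "bij_betw (restr X) (Ext Y) (Ext X)
    \<and> (\<forall>f\<in>Ext Y. \<forall>g\<in>Ext Y. sup_dist X (restr X f) (restr X g) = sup_dist Y f g)"
proof -
  have cone: "\<And>x y. x \<in> Y \<Longrightarrow> y \<in> Y \<Longrightarrow> \<exists>z\<in>X. dist x y + dist y z = dist x z"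
    using assms(3) metric_cone_meets_iff[OF assms(1)] by blast
  show ?thesis
    using bij_betw_restr_Ext[OF assms(1) cone assms(2)] sup_dist_restr_Ext[OF assms(1) cone]
    by blast
qed

end
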